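(* Let $\lambda<\kappa$ be cardinals (with $\lambda\ge1$) and let $(S,\mu)$ be a multisemigroup with multiplicities bounded by $\kappa$. Let $\Phi_{\lambda,\kappa}:\mathrm{Card}_\kappa\to\mathrm{Card}_\lambda$ be defined by $\Phi_{\lambda,\kappa}(\nu)=\nu$ if $\nu\le\lambda$ and $\Phi_{\lambda,\kappa}(\nu)=\lambda$ otherwise. Then $(S,\Phi_{\lambda,\kappa}\circ\mu)$ (meaning $(s,t)\mapsto\Phi_{\lambda,\kappa}\circ\mu_{s,t}$) is a multisemigroup with multiplicities bounded by $\lambda$.
   Context: For a cardinal $\kappa\ge1$, $\mathrm{Card}_\kappa$ denotes the complete semiring of all cardinals $\le\kappa$, with sum of arbitrary families given by cardinal sum and product by cardinal product, every cardinal greater than $\kappa$ being identified with $\kappa$. $\mathcal{B}_\kappa(S)$ is the set of functions $S\to\mathrm{Card}_\kappa$. For a cardinal $\lambda'$ and $\nu\in\mathcal{B}_\kappa(S)$, $\lambda'\nu$ is the pointwise sum of $\lambda'$ copies of $\nu$. A multisemigroup with multiplicities bounded by $\kappa$ is a pair $(S,\mu)$, $S$ a non-empty set and $\mu:S\times S\to\mathcal{B}_\kappa(S)$, $(s,t)\mapsto\mu_{s,t}$, such that for all $r,s,t\in S$: $\sum_{i\in S}\mu_{s,t}(i)\mu_{r,i}=\sum_{j\in S}\mu_{r,s}(j)\mu_{j,t}$ (computed in $\mathcal{B}_\kappa(S)$). *)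

theory Defs
  imports "HOL-Library.Equipollence"
begin

text \<open>Cardinals are represented by sets (of some type 'k) up to equipollence.
  The cardinal kappa is represented by a set K; Card_kappa consists of (the
  cardinalities of) sets X with X lepoll K.  Every cardinal greater than kappa
  is identified with kappa, i.e. represented by K itself.\<close>

definition trunc :: "'k set \<Rightarrow> 'b set \<Rightarrow> 'k set" where
  "trunc K X = (if X \<lesssim> K then (SOME B. B \<subseteq> K \<and> B \<approx> X) else K)"

definition cprod :: "'k set \<Rightarrow> 'k set \<Rightarrow> 'k set \<Rightarrow> 'k set" where
  "cprod K A B = trunc K (A \<times> B)"

definition csum :: "'k set \<Rightarrow> 'i set \<Rightarrow> ('i \<Rightarrow> 'k set) \<Rightarrow> 'k set" where
  "csum K I f = trunc K (SIGMA i:I. f i)"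

text \<open>Multisemigroup with multiplicities bounded by kappa (represented by K).
  mu s t is the function mu_{s,t} : S -> Card_kappa.  The associativity axiom is
  checked pointwise at every x in S; (lambda' nu)(x) = lambda' * nu(x) in Card_kappa.\<close>
definition multisemigroup :: "'k set \<Rightarrow> 'a set \<Rightarrow> ('a \<Rightarrow> 'a \<Rightarrow> 'a \<Rightarrow> 'k set) \<Rightarrow> bool" where
  "multisemigroup K S \<mu> \<longleftrightarrow>
     K \<noteq> {} \<and> S \<noteq> {} \<and>
     (\<forall>s\<in>S. \<forall>t\<in>S. \<forall>i\<in>S. \<mu> s t i \<lesssim> K) \<and>
     (\<forall>r\<in>S. \<forall>s\<in>S. \<forall>t\<in>S. \<forall>x\<in>S.
        csum K S (\<lambda>i. cprod K (\<mu> s t i) (\<mu> r i x))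
          \<approx> csum K S (\<lambda>j. cprod K (\<mu> r s j) (\<mu> j t x)))"

definition Phi :: "'k set \<Rightarrow> 'k set \<Rightarrow> 'k set" where
  "Phi L A = (if A \<lesssim> L then A else L)"

end

theory Submission
  imports Defs
begin

text \<open>Truncating at \<open>\<lambda>\<close> commutes with the operations of \<open>Card_\<kappa>\<close>: for \<open>\<lambda> \<le> \<kappa>\<close>, a product or
  sum of truncated cardinals has the same truncation at \<open>\<lambda>\<close> as the untruncated one, because
  as soon as one factor (summand) reaches \<open>\<lambda>\<close> so does the product (sum), nonempty factors
  assumed.  Hence both sides of the associativity law for \<open>\<Phi> \<circ> \<mu>\<close> are the truncations at
  \<open>\<lambda>\<close> of the two sides of the law for \<open>\<mu>\<close>, which agree.\<close>

lemma lepoll_total: "A \<lesssim> B \<or> B \<lesssim> A"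
  by (metis card_of_Well_order card_of_ordLeq lepoll_def ordLeq_total)

lemma trunc_lepoll_eqpoll:
  assumes "X \<lesssim> K"
  shows "trunc K X \<subseteq> K" and "trunc K X \<approx> X"
proof -
  from assms obtain f where "inj_on f X" "f ` X \<subseteq> K" by (auto simp: lepoll_def)
  then have "\<exists>B. B \<subseteq> K \<and> B \<approx> X"
    by (metis eqpoll_sym inj_on_image_eqpoll_self)
  then have "(SOME B. B \<subseteq> K \<and> B \<approx> X) \<subseteq> K \<and> (SOME B. B \<subseteq> K \<and> B \<approx> X) \<approx> X"
    by (rule someI_ex)
  with assms show "trunc K X \<subseteq> K" and "trunc K X \<approx> X"
    unfolding trunc_def by simp_all
qed

lemma trunc_not_lepoll: "\<not> X \<lesssim> K \<Longrightarrow> trunc K X = K"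
  by (simp add: trunc_def)

lemma trunc_lepoll: "trunc K X \<lesssim> K"
  by (metis trunc_lepoll_eqpoll(1) trunc_not_lepoll subset_imp_lepoll lepoll_refl)

text \<open>Equality of cardinalities in \<open>Card_\<lambda>\<close>, where \<open>\<lambda> = |L|\<close>, after truncation.\<close>

definition eqpoll_upto :: "'k set \<Rightarrow> 'b set \<Rightarrow> 'c set \<Rightarrow> bool" where
  "eqpoll_upto L X Y \<longleftrightarrow> (X \<lesssim> L \<and> Y \<lesssim> L \<and> X \<approx> Y) \<or> (L \<lesssim> X \<and> L \<lesssim> Y)"

lemma eqpoll_upto_sym: "eqpoll_upto L X Y \<Longrightarrow> eqpoll_upto L Y X"
  unfolding eqpoll_upto_def using eqpoll_sym by blast

lemma eqpoll_upto_trans [trans]: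
  "eqpoll_upto L X Y \<Longrightarrow> eqpoll_upto L Y Z \<Longrightarrow> eqpoll_upto L X Z"
  unfolding eqpoll_upto_def
  by (meson eqpoll_trans eqpoll_imp_lepoll eqpoll_sym lepoll_trans lepoll_trans1 lepoll_trans2
      lepoll_antisym)

lemma eqpoll_imp_eqpoll_upto: "X \<approx> Y \<Longrightarrow> eqpoll_upto L X Y"
  unfolding eqpoll_upto_def
  by (meson eqpoll_sym lepoll_total lepoll_trans1 lepoll_trans2)

lemma eqpoll_upto_imp_eqpoll: "eqpoll_upto L X Y \<Longrightarrow> X \<lesssim> L \<Longrightarrow> Y \<lesssim> L \<Longrightarrow> X \<approx> Y"
  unfolding eqpoll_upto_def by (meson eqpoll_sym eqpoll_trans lepoll_antisym)

lemma eqpoll_upto_trunc: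
  assumes "L \<lesssim> K"
  shows "eqpoll_upto L (trunc K X) X"
proof (cases "X \<lesssim> K")
  case True
  then show ?thesis by (intro eqpoll_imp_eqpoll_upto trunc_lepoll_eqpoll(2))
next
  case False
  then have "L \<lesssim> X" using assms lepoll_total lepoll_trans by metis
  with False assms show ?thesis unfolding eqpoll_upto_def by (simp add: trunc_not_lepoll)
qed

lemma eqpoll_upto_Phi: "eqpoll_upto L (Phi L X) X"
  using lepoll_total[of X L] by (auto simp: Phi_def eqpoll_upto_def)

lemma eqpoll_upto_times:
  assumes "eqpoll_upto L A A'" and "eqpoll_upto L B B'"
  shows "eqpoll_upto L (A \<times> B) (A' \<times> B')"
proof (cases "A \<approx> A' \<and> B \<approx> B'")
  case True
  then show ?thesis by (simp add: eqpoll_imp_eqpoll_upto times_eqpoll_cong)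
next
  case False
  with assms have large: "(L \<lesssim> A \<and> L \<lesssim> A') \<or> (L \<lesssim> B \<and> L \<lesssim> B')"
    unfolding eqpoll_upto_def by blast
  show ?thesis
  proof (cases "L = {}")
    case True
    then show ?thesis by (simp add: eqpoll_upto_def)
  next
    case False
    \<comment> \<open>a factor of size at least \<open>|L| > 0\<close> is nonempty, so an empty factor on one side forces one on the other\<close>
    have empty_iff: "A = {} \<longleftrightarrow> A' = {}" "B = {} \<longleftrightarrow> B' = {}"
      using assms False by (auto simp: eqpoll_upto_def dest: eqpoll_sym)
    show ?thesis
    proof (cases "A = {} \<or> B = {}")
      case True
      with empty_iff show ?thesis by (auto intro: eqpoll_imp_eqpoll_upto)
    next
      case False
      with empty_iff have "A \<noteq> {}" "B \<noteq> {}" "A' \<noteq> {}" "B' \<noteq> {}" by auto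
      then have "A \<lesssim> A \<times> B" "A' \<lesssim> A' \<times> B'" "B \<lesssim> A \<times> B" "B' \<lesssim> A' \<times> B'"
        by (simp_all add: lepoll_times1 lepoll_times2)
      with large have "L \<lesssim> A \<times> B \<and> L \<lesssim> A' \<times> B'"
        by (meson lepoll_trans)
      then show ?thesis unfolding eqpoll_upto_def by blast
    qed
  qed
qed

lemma eqpoll_upto_Sigma:
  assumes "\<And>i. i \<in> I \<Longrightarrow> eqpoll_upto L (A i) (B i)"
  shows "eqpoll_upto L (Sigma I A) (Sigma I B)"
proof (cases "\<exists>i\<in>I. L \<lesssim> A i \<and> L \<lesssim> B i")
  case True
  then obtain i where i: "i \<in> I" "L \<lesssim> A i" "L \<lesssim> B i" by blast
  have "C i \<lesssim> Sigma I C" for C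
  proof -
    have "C i \<approx> {i} \<times> C i" by (simp add: eqpoll_sym times_singleton_eqpoll)
    also have "{i} \<times> C i \<lesssim> Sigma I C" using i(1) by (intro subset_imp_lepoll) auto
    finally show ?thesis .
  qed
  with i show ?thesis unfolding eqpoll_upto_def by (meson lepoll_trans)
next
  case False
  with assms have "\<And>i. i \<in> I \<Longrightarrow> A i \<approx> B i" unfolding eqpoll_upto_def by blast
  then have "Sigma I A \<approx> Sigma I B" by (intro Sigma_eqpoll_cong[where h=id]) auto
  then show ?thesis by (rule eqpoll_imp_eqpoll_upto)
qed

lemma eqpoll_upto_csum_cprod_Phi:
  assumes "L \<lesssim> K"
  shows "eqpoll_upto L (csum L I (\<lambda>i. cprod L (Phi L (a i)) (Phi L (b i))))
                       (csum K I (\<lambda>i. cprod K (a i) (b i)))"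
proof -
  have "eqpoll_upto L (csum L I (\<lambda>i. cprod L (Phi L (a i)) (Phi L (b i))))
                      (SIGMA i:I. cprod L (Phi L (a i)) (Phi L (b i)))"
    unfolding csum_def by (rule eqpoll_upto_trunc[OF lepoll_refl])
  also have "eqpoll_upto L \<dots> (SIGMA i:I. a i \<times> b i)"
    unfolding cprod_def
    by (intro eqpoll_upto_Sigma eqpoll_upto_trans[OF eqpoll_upto_trunc[OF lepoll_refl]]
        eqpoll_upto_times eqpoll_upto_Phi)
  also have "eqpoll_upto L \<dots> (SIGMA i:I. cprod K (a i) (b i))"
    unfolding cprod_def
    by (intro eqpoll_upto_Sigma eqpoll_upto_sym[OF eqpoll_upto_trunc[OF assms]])
  also have "eqpoll_upto L \<dots> (csum K I (\<lambda>i. cprod K (a i) (b i)))"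
    unfolding csum_def by (rule eqpoll_upto_sym[OF eqpoll_upto_trunc[OF assms]])
  finally show ?thesis .
qed

theorem proposition11:
  fixes K L :: "'k set" and S :: "'a set" and \<mu> :: "'a \<Rightarrow> 'a \<Rightarrow> 'a \<Rightarrow> 'k set"
  assumes "L \<noteq> {}" and "L \<prec> K" and "multisemigroup K S \<mu>"
  shows "multisemigroup L S (\<lambda>s t i. Phi L (\<mu> s t i))"
  unfolding multisemigroup_def
proof (intro conjI ballI)
  show "L \<noteq> {}" "S \<noteq> {}" using assms(1,3) by (simp_all add: multisemigroup_def)
  show "Phi L (\<mu> s t i) \<lesssim> L" for s t i by (simp add: Phi_def)
next
  fix r s t x assume "r \<in> S" "s \<in> S" "t \<in> S" "x \<in> S"
  let ?lhs = "\<lambda>L \<nu>. csum L S (\<lambda>i. cprod L (\<nu> s t i) (\<nu> r i x))"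
    and ?rhs = "\<lambda>L \<nu>. csum L S (\<lambda>j. cprod L (\<nu> r s j) (\<nu> j t x))"
  have LK: "L \<lesssim> K" using assms(2) by (rule lesspoll_imp_lepoll)
  have "eqpoll_upto L (?lhs L (\<lambda>s t i. Phi L (\<mu> s t i))) (?lhs K \<mu>)"
    by (rule eqpoll_upto_csum_cprod_Phi[OF LK])
  also have "eqpoll_upto L \<dots> (?rhs K \<mu>)"
    using assms(3) \<open>r \<in> S\<close> \<open>s \<in> S\<close> \<open>t \<in> S\<close> \<open>x \<in> S\<close>
    by (intro eqpoll_imp_eqpoll_upto) (simp add: multisemigroup_def)
  also have "eqpoll_upto L \<dots> (?rhs L (\<lambda>s t i. Phi L (\<mu> s t i)))"
    by (rule eqpoll_upto_sym[OF eqpoll_upto_csum_cprod_Phi[OF LK]])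
  finally show "?lhs L (\<lambda>s t i. Phi L (\<mu> s t i)) \<approx> ?rhs L (\<lambda>s t i. Phi L (\<mu> s t i))"
    by (rule eqpoll_upto_imp_eqpoll) (simp_all add: csum_def trunc_lepoll)
qed

end
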